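(* Consider the dual-frame setting and asymptotic framework described in the context, and suppose assumptions (A1), (A2) and (A4) hold. Let $\hat{e}_k=y_k-\mathbf{x}_k\hat{\beta}^{\circ}$ for $k\in s$. Then the variance estimator $$v(\hat{Y}_{GREG})=v(\hat{t}_{\hat{e}H})=v\Big(\sum_{k\in s_a}d_{Ak}\hat{e}_k+\eta\sum_{k\in s_{ab}}d_{Ak}\hat{e}_k\Big)+v\Big((1-\eta)\sum_{k\in s_{ba}}d_{Bk}\hat{e}_k+\sum_{k\in s_b}d_{Bk}\hat{e}_k\Big)$$ satisfies $v(\hat{Y}_{GREG})=V(\hat{t}_{eH})+o_p(N^2n_N^{-1})$, where $\hat{t}_{eH}=\sum_{k\in s}d_k^{\circ}e_k$ and $e_k=y_k-\mathbf{x}_k\mathbf{B}_U$.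
   Context: Finite population $\mathcal{U}=\{1,\dots,N\}$ covered by two sampling frames with unit sets $\mathcal{A},\mathcal{B}$, $\mathcal{A}\cup\mathcal{B}=\mathcal{U}$. Domains: $a=\mathcal{A}\cap\mathcal{B}^c$, $b=\mathcal{A}^c\cap\mathcal{B}$, $ab=\mathcal{A}\cap\mathcal{B}$, $ba$ a duplicate of $ab$. Independent samples $s_A$ from $\mathcal{A}$ (design $p_A$, weights $d_{Ak}=1/\pi_{Ak}$) and $s_B$ from $\mathcal{B}$ (design $p_B$, $d_{Bk}=1/\pi_{Bk}$), sizes $n_A,n_B$. $s_a=s_A\cap a$, $s_{ab}=s_A\cap ab$, $s_{ba}=s_B\cap ab$, $s_b=s_B\cap b$, $s$ their union (overlap records from the two samples kept separately). For fixed $\eta\in(0,1)$, Hartley weights $d_k^\circ=d_{Ak}$ on $s_a$, $\eta d_{Ak}$ on $s_{ab}$, $(1-\eta)d_{Bk}$ on $s_{ba}$, $d_{Bk}$ on $s_b$. Study variable $y$ with total $Y$; Hartley estimator $\hat Y_H=\sum_{k\in s}d_k^\circ y_k$, with design variance $V(\hat{Y}_H)=V(\hat{Y}_a+\eta\hat{Y}_{ab})+V((1-\eta)\hat{Y}_{ba}+\hat{Y}_b)$ (first term under $p_A$, second under $p_B$); similarly for other totals. Auxiliary row vectors $\mathbf{x}_k\in\mathbb{R}^p$ with known total $\mathbf{t}_x=\sum_{k=1}^N\mathbf{x}_k$, $\hat{\mathbf{t}}_{xH}=\sum_{k\in s}d_k^\circ\mathbf{x}_k$. $\hat{\beta}^{\circ}=\big(\sum_{k\in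 s}d_k^{\circ}\mathbf{x}_k^T\mathbf{x}_k\big)^{-1}\sum_{k\in s}d_k^{\circ}\mathbf{x}_k^Ty_k$, $\mathbf{B}_U=\big(\sum_{k=1}^N\mathbf{x}_k^T\mathbf{x}_k\big)^{-1}\sum_{k=1}^N\mathbf{x}_k^Ty_k$, and $\hat{Y}_{GREG}=\hat{Y}_H+(\mathbf{t}_x-\hat{\mathbf{t}}_{xH})\hat{\beta}^{\circ}$. For each frame a variance (and covariance) estimator $v$ (resp. $c$) for the frame-specific Horvitz–Thompson-type estimators is available, and for Hartley-type estimators one sets $v(\hat{Y}_H)=v(\hat{Y}_a+\eta\hat{Y}_{ab})+v((1-\eta)\hat{Y}_{ba}+\hat{Y}_b)$, and similarly $\mathbf{c}(\hat{\mathbf{t}}_{xH},\hat Y_H)$, $\mathbf{v}(\hat{\mathbf{t}}_{xH})$. Asymptotic framework: a sequence $\{\mathcal{U}_N,p_{A_N},p_{B_N}\}$, $N\to\infty$, with $N_A,N_B,n_A,n_B\to\infty$, $N_a>0$, $N_b>0$, $n_A/n_N\to c_1\in(0,1)$ ($n_N=n_A+n_B$), $N_a/N_A\to c_2\in(0,1)$, $N_b/N_B\to c_3\in(0,1)$, $\eta$ fixed; $O_p,o_p$ with respect to the designs. (A1) $\lim_{N\to\infty}\mathbf{B}_U$ exists, and $\sum_{k=1}^N\mathbf{x}_k^T\mathbf{x}_k$, $\sum_{k=1}^N\mathbf{x}_k^Ty_k$ are consistently estimated by $\sum_{k\in s}d_k^\circ\mathbf{x}_k^T\mathbf{x}_k$,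 $\sum_{k\in s}d_k^\circ\mathbf{x}_k^Ty_k$. (A2) $\Sigma=\lim_{N\to\infty}\frac{n_N}{N^2}\begin{bmatrix}V(\hat{Y}_H)&\mathbf{C}(\hat{\mathbf{t}}_{xH},\hat{Y}_H)\\ \mathbf{C}(\hat{\mathbf{t}}_{xH},\hat{Y}_H)^T&\mathbf{V}(\hat{\mathbf{t}}_{xH})\end{bmatrix}$ exists and is positive definite. (A4) $\frac{n_N}{N^2}\begin{bmatrix}v(\hat{Y}_H)&\mathbf{c}(\hat{\mathbf{t}}_{xH},\hat{Y}_H)\\ \mathbf{c}(\hat{\mathbf{t}}_{xH},\hat{Y}_H)^T&\mathbf{v}(\hat{\mathbf{t}}_{xH})\end{bmatrix}-\Sigma=o_p(1)$. *)

theory Defs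
  imports "HOL-Probability.Probability"
begin

text \<open>For a fixed population index N we are given the frames
  A, B (subsets of the population), the designs pA, pB (probability mass functions on
  samples, i.e. on finite subsets of the frame), the overlap parameter eta, and the
  outcome of the two independent samples as a pair (SA, SB).\<close>

definition incl_prob :: "nat set pmf \<Rightarrow> nat \<Rightarrow> real" where
  "incl_prob p k = measure_pmf.prob p {S. k \<in> S}"

definition hmultA :: "real \<Rightarrow> nat set \<Rightarrow> nat \<Rightarrow> real" where
  "hmultA eta B k = (if k \<in> B then eta else 1)"

definition hmultB :: "real \<Rightarrow> nat set \<Rightarrow> nat \<Rightarrow> real" where
  "hmultB eta A k = (if k \<in> A then 1 - eta else 1)"

definition ht_total :: "nat set pmf \<Rightarrow> nat set \<Rightarrow> (nat \<Rightarrow> 'b::real_vector) \<Rightarrow> 'b" where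
  "ht_total p S u = (\<Sum>k\<in>S. (1 / incl_prob p k) *\<^sub>R u k)"

text \<open>Hartley estimator sum_{k in s} d_k^o f_k (overlap records of both samples kept separately).\<close>
definition hartley_sum ::
  "nat set pmf \<Rightarrow> nat set pmf \<Rightarrow> nat set \<Rightarrow> nat set \<Rightarrow> real \<Rightarrow> nat set \<times> nat set
    \<Rightarrow> (nat \<Rightarrow> 'b::real_vector) \<Rightarrow> 'b" where
  "hartley_sum pA pB A B eta s f =
     ht_total pA (fst s) (\<lambda>k. hmultA eta B k *\<^sub>R f k) +
     ht_total pB (snd s) (\<lambda>k. hmultB eta A k *\<^sub>R f k)"

definition pmf_cov :: "'a pmf \<Rightarrow> ('a \<Rightarrow> real) \<Rightarrow> ('a \<Rightarrow> real) \<Rightarrow> real" where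
  "pmf_cov p f g = measure_pmf.expectation p
     (\<lambda>\<omega>. (f \<omega> - measure_pmf.expectation p f) * (g \<omega> - measure_pmf.expectation p g))"

text \<open>With z = w this is the design variance V.\<close>
definition hartley_cov ::
  "nat set pmf \<Rightarrow> nat set pmf \<Rightarrow> nat set \<Rightarrow> nat set \<Rightarrow> real
    \<Rightarrow> (nat \<Rightarrow> real) \<Rightarrow> (nat \<Rightarrow> real) \<Rightarrow> real" where
  "hartley_cov pA pB A B eta z w =
     pmf_cov pA (\<lambda>S. ht_total pA S (\<lambda>k. hmultA eta B k * z k))
                (\<lambda>S. ht_total pA S (\<lambda>k. hmultA eta B k * w k)) +
     pmf_cov pB (\<lambda>S. ht_total pB S (\<lambda>k. hmultB eta A k * z k))
                (\<lambda>S. ht_total pB S (\<lambda>k. hmultB eta A k * w k))"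

text \<open>Frame-specific (quadratic / bilinear) variance-covariance estimator of HT-type
  estimators: for a sample S and variables u, w,
  c(t_u, t_w) = sum_{k in S} sum_{l in S} Om S k l u_k w_l,
  with v(t_u) = c(t_u, t_u); the kernel Om depends on the sample only.\<close>
definition quad_est :: "(nat set \<Rightarrow> nat \<Rightarrow> nat \<Rightarrow> real) \<Rightarrow> nat set
    \<Rightarrow> (nat \<Rightarrow> real) \<Rightarrow> (nat \<Rightarrow> real) \<Rightarrow> real" where
  "quad_est Om S u w = (\<Sum>k\<in>S. \<Sum>l\<in>S. Om S k l * u k * w l)"

text \<open>Hartley-type covariance estimator c(Z_H, W_H) = c_A(...) + c_B(...); with z = w it is v.
  The variables may depend on the realised samples.\<close>
definition hartley_cov_est ::
  "(nat set \<Rightarrow> nat \<Rightarrow> nat \<Rightarrow> real) \<Rightarrow> (nat set \<Rightarrow> nat \<Rightarrow> nat \<Rightarrow> real) \<Rightarrow> nat set \<Rightarrow> nat set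
    \<Rightarrow> real \<Rightarrow> nat set \<times> nat set \<Rightarrow> (nat \<Rightarrow> real) \<Rightarrow> (nat \<Rightarrow> real) \<Rightarrow> real" where
  "hartley_cov_est OmA OmB A B eta s z w =
     quad_est OmA (fst s) (\<lambda>k. hmultA eta B k * z k) (\<lambda>k. hmultA eta B k * w k) +
     quad_est OmB (snd s) (\<lambda>k. hmultB eta A k * z k) (\<lambda>k. hmultB eta A k * w k)"

definition outer :: "real ^ 'p \<Rightarrow> real ^ 'p ^ 'p" where
  "outer v = (\<chi> i j. v $ i * v $ j)"

definition op1 :: "(nat \<Rightarrow> 'a pmf) \<Rightarrow> (nat \<Rightarrow> 'a \<Rightarrow> real) \<Rightarrow> bool" where
  "op1 P X \<longleftrightarrow> (\<forall>\<epsilon>>0. ((\<lambda>N. measure_pmf.prob (P N) {\<omega>. \<epsilon> < \<bar>X N \<omega>\<bar>}) \<longlongrightarrow> 0) sequentially)"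

definition pos_def :: "('i::finite \<Rightarrow> 'i \<Rightarrow> real) \<Rightarrow> bool" where
  "pos_def M \<longleftrightarrow> (\<forall>a::'i \<Rightarrow> real. (\<exists>j. a j \<noteq> 0) \<longrightarrow> 0 < (\<Sum>j\<in>UNIV. \<Sum>l\<in>UNIV. a j * a l * M j l))"

text \<open>The joint variable (y, x): index None is y, index Some i is the i-th auxiliary.\<close>
definition yx_var :: "(nat \<Rightarrow> real) \<Rightarrow> (nat \<Rightarrow> real ^ 'p) \<Rightarrow> 'p option \<Rightarrow> nat \<Rightarrow> real" where
  "yx_var y x j k = (case j of None \<Rightarrow> y k | Some i \<Rightarrow> x k $ i)"

end

theory Submission
  imports Defs
begin

text \<open>The residual \<open>y\<^sub>k - x\<^sub>k \<beta>\<close> is the linear combination of the components of the joint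
  variable \<open>(y, x)\<close> with coefficients \<open>(1, -\<beta>)\<close>. Since the variance estimator \<open>v\<close> and the
  design variance \<open>V\<close> are bilinear, \<open>v(\<hat>t\<^sub>\<hat>e\<^sub>H)\<close> and \<open>V(\<hat>t\<^sub>e\<^sub>H)\<close> are quadratic forms in
  these coefficients, with matrices \<open>v\<close> resp. \<open>V\<close> of the Hartley estimators of the totals of
  \<open>(y, x)\<close>. After scaling by \<open>n\<^sub>N/N\<^sup>2\<close> both matrices tend to \<open>\<Sigma>\<close>, by (A4) in probability and
  by (A2) deterministically, while the estimated coefficient \<open>\<hat>\<beta>\<degree>\<close> approaches the bounded
  population coefficient \<open>B\<^sub>U\<close> in probability by (A1). The two quadratic forms therefore
  differ by \<open>o\<^sub>p(1)\<close>.\<close>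

subsection \<open>Convergence in probability to zero\<close>

lemma op1_cover:
  assumes "op1 P Y" "op1 P Z"
    and cover: "\<And>\<epsilon>. \<epsilon> > 0 \<Longrightarrow>
      \<exists>\<delta>>0. \<forall>N \<omega>. \<epsilon> < \<bar>X N \<omega>\<bar> \<longrightarrow> \<delta> < \<bar>Y N \<omega>\<bar> \<or> \<delta> < \<bar>Z N \<omega>\<bar>"
  shows "op1 P X"
  unfolding op1_def
proof (intro allI impI)
  fix \<epsilon> :: real
  assume "\<epsilon> > 0"
  then obtain \<delta> where "\<delta> > 0"
    and \<delta>: "\<And>N \<omega>. \<epsilon> < \<bar>X N \<omega>\<bar> \<Longrightarrow> \<delta> < \<bar>Y N \<omega>\<bar> \<or> \<delta> < \<bar>Z N \<omega>\<bar>"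
    using cover by blast
  let ?p = "\<lambda>N A. measure_pmf.prob (P N) A"
  have bound: "?p N {\<omega>. \<epsilon> < \<bar>X N \<omega>\<bar>} \<le> ?p N {\<omega>. \<delta> < \<bar>Y N \<omega>\<bar>} + ?p N {\<omega>. \<delta> < \<bar>Z N \<omega>\<bar>}"
    for N
  proof -
    have "?p N {\<omega>. \<epsilon> < \<bar>X N \<omega>\<bar>} \<le> ?p N ({\<omega>. \<delta> < \<bar>Y N \<omega>\<bar>} \<union> {\<omega>. \<delta> < \<bar>Z N \<omega>\<bar>})"
      using \<delta> by (intro measure_pmf.finite_measure_mono) auto
    also have "\<dots> \<le> ?p N {\<omega>. \<delta> < \<bar>Y N \<omega>\<bar>} + ?p N {\<omega>. \<delta> < \<bar>Z N \<omega>\<bar>}"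
      by (rule measure_Un_le) auto
    finally show ?thesis .
  qed
  have "(\<lambda>N. ?p N {\<omega>. \<delta> < \<bar>Y N \<omega>\<bar>}) \<longlonglongrightarrow> 0" "(\<lambda>N. ?p N {\<omega>. \<delta> < \<bar>Z N \<omega>\<bar>}) \<longlonglongrightarrow> 0"
    using assms(1,2) \<open>\<delta> > 0\<close> unfolding op1_def by blast+
  from tendsto_add[OF this]
  have lim: "(\<lambda>N. ?p N {\<omega>. \<delta> < \<bar>Y N \<omega>\<bar>} + ?p N {\<omega>. \<delta> < \<bar>Z N \<omega>\<bar>}) \<longlonglongrightarrow> 0"
    by simp
  show "(\<lambda>N. ?p N {\<omega>. \<epsilon> < \<bar>X N \<omega>\<bar>}) \<longlonglongrightarrow> 0"
    by (rule tendsto_sandwich[OF _ _ tendsto_const lim]) (simp_all add: bound)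
qed

lemma op1_cong: "op1 P X \<Longrightarrow> (\<And>N \<omega>. X N \<omega> = Y N \<omega>) \<Longrightarrow> op1 P Y"
  by (simp add: op1_def)

lemma op1_abs: "op1 P X \<Longrightarrow> op1 P (\<lambda>N \<omega>. \<bar>X N \<omega>\<bar>)"
  by (simp add: op1_def)

lemma op1_minus: "op1 P X \<Longrightarrow> op1 P (\<lambda>N \<omega>. - X N \<omega>)"
  by (simp add: op1_def)

lemma op1_const:
  assumes "c \<longlonglongrightarrow> 0"
  shows "op1 P (\<lambda>N \<omega>. c N)"
  unfolding op1_def
proof (intro allI impI)
  fix \<epsilon> :: real
  assume "\<epsilon> > 0"
  with assms have "eventually (\<lambda>N. \<bar>c N\<bar> < \<epsilon>) sequentially"
    by (metis order_tendstoD(2) tendsto_rabs_zero)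
  then have "eventually (\<lambda>N. measure_pmf.prob (P N) {\<omega>. \<epsilon> < \<bar>c N\<bar>} = 0) sequentially"
    by eventually_elim auto
  then show "(\<lambda>N. measure_pmf.prob (P N) {\<omega>. \<epsilon> < \<bar>c N\<bar>}) \<longlonglongrightarrow> 0"
    by (rule tendsto_eventually)
qed

lemma op1_zero: "op1 P (\<lambda>N \<omega>. 0)"
  using op1_const[of "\<lambda>_. 0"] by simp

lemma op1_add:
  assumes "op1 P X" "op1 P Y"
  shows "op1 P (\<lambda>N \<omega>. X N \<omega> + Y N \<omega>)"
proof (rule op1_cover[OF assms])
  fix \<epsilon> :: real
  assume "\<epsilon> > 0"
  then show "\<exists>\<delta>>0. \<forall>N \<omega>. \<epsilon> < \<bar>X N \<omega> + Y N \<omega>\<bar> \<longrightarrow> \<delta> < \<bar>X N \<omega>\<bar> \<or> \<delta> < \<bar>Y N \<omega>\<bar>"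
    by (intro exI[of _ "\<epsilon> / 2"]) auto
qed

lemma op1_diff: "op1 P X \<Longrightarrow> op1 P Y \<Longrightarrow> op1 P (\<lambda>N \<omega>. X N \<omega> - Y N \<omega>)"
  using op1_add[of P X "\<lambda>N \<omega>. - Y N \<omega>"] op1_minus[of P Y] by simp

lemma op1_sum:
  assumes "finite I" "\<And>i. i \<in> I \<Longrightarrow> op1 P (X i)"
  shows "op1 P (\<lambda>N \<omega>. \<Sum>i\<in>I. X i N \<omega>)"
  using assms
proof (induction I rule: finite_induct)
  case (insert i I)
  then show ?case using op1_add[of P "X i" "\<lambda>N \<omega>. \<Sum>i\<in>I. X i N \<omega>"] by simp
qed (simp add: op1_zero)

lemma op1_mult:
  assumes "op1 P X" "op1 P Y"
  shows "op1 P (\<lambda>N \<omega>. X N \<omega> * Y N \<omega>)"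
proof (rule op1_cover[OF assms])
  fix \<epsilon> :: real
  assume "\<epsilon> > 0"
  have "\<bar>X N \<omega> * Y N \<omega>\<bar> \<le> \<epsilon>" if "\<bar>X N \<omega>\<bar> \<le> min 1 \<epsilon>" "\<bar>Y N \<omega>\<bar> \<le> min 1 \<epsilon>" for N \<omega>
  proof -
    have "\<bar>X N \<omega>\<bar> * \<bar>Y N \<omega>\<bar> \<le> 1 * \<epsilon>"
      using that by (intro mult_mono) auto
    then show ?thesis by (simp add: abs_mult)
  qed
  then show "\<exists>\<delta>>0. \<forall>N \<omega>. \<epsilon> < \<bar>X N \<omega> * Y N \<omega>\<bar> \<longrightarrow> \<delta> < \<bar>X N \<omega>\<bar> \<or> \<delta> < \<bar>Y N \<omega>\<bar>"
    using \<open>\<epsilon> > 0\<close> by (intro exI[of _ "min 1 \<epsilon>"]) (auto simp flip: not_le)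
qed

lemma op1_locally_dominated:
  assumes "op1 P Z" "K > 0" "d > 0"
    and dom: "\<And>N \<omega>. \<bar>Z N \<omega>\<bar> \<le> d \<Longrightarrow> \<bar>X N \<omega>\<bar> \<le> K * \<bar>Z N \<omega>\<bar>"
  shows "op1 P X"
proof (rule op1_cover[OF assms(1,1)])
  fix \<epsilon> :: real
  assume "\<epsilon> > 0"
  have "\<bar>X N \<omega>\<bar> \<le> \<epsilon>" if "\<bar>Z N \<omega>\<bar> \<le> min d (\<epsilon> / K)" for N \<omega>
  proof -
    have "\<bar>X N \<omega>\<bar> \<le> K * \<bar>Z N \<omega>\<bar>" using dom that by simp
    also have "\<dots> \<le> K * (\<epsilon> / K)" using that \<open>K > 0\<close> by (intro mult_left_mono) auto
    finally show ?thesis using \<open>K > 0\<close> by simp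
  qed
  moreover have "0 < min d (\<epsilon> / K)"
    using \<open>\<epsilon> > 0\<close> assms(2,3) by simp
  ultimately show "\<exists>\<delta>>0. \<forall>N \<omega>. \<epsilon> < \<bar>X N \<omega>\<bar> \<longrightarrow> \<delta> < \<bar>Z N \<omega>\<bar> \<or> \<delta> < \<bar>Z N \<omega>\<bar>"
    by (intro exI[of _ "min d (\<epsilon> / K)"]) (auto simp flip: not_le)
qed

lemma op1_mult_bounded:
  assumes "op1 P X" "\<And>N. \<bar>c N\<bar> \<le> K"
  shows "op1 P (\<lambda>N \<omega>. c N * X N \<omega>)"
proof (rule op1_locally_dominated[OF assms(1), of "\<bar>K\<bar> + 1" 1])
  fix N \<omega>
  have "\<bar>c N\<bar> \<le> \<bar>K\<bar> + 1" using assms(2)[of N] by linarith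
  then show "\<bar>c N * X N \<omega>\<bar> \<le> (\<bar>K\<bar> + 1) * \<bar>X N \<omega>\<bar>"
    by (simp add: abs_mult mult_right_mono)
qed auto

text \<open>Products of consistent estimators of bounded quantities, with a common limit \<open>S\<close>
  standing in for the boundedness in probability of \<open>X\<close>.\<close>

lemma op1_mult_consistent:
  assumes \<alpha>: "op1 P (\<lambda>N \<omega>. \<alpha> N \<omega> - a N)" and \<beta>: "op1 P (\<lambda>N \<omega>. \<beta> N \<omega> - b N)"
    and X: "op1 P (\<lambda>N \<omega>. X N \<omega> - S)" and Y: "(\<lambda>N. Y N - S) \<longlonglongrightarrow> 0"
    and a: "\<And>N. \<bar>a N\<bar> \<le> K" and b: "\<And>N. \<bar>b N\<bar> \<le> K"
  shows "op1 P (\<lambda>N \<omega>. \<alpha> N \<omega> * \<beta> N \<omega> * X N \<omega> - a N * b N * Y N)"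
proof -
  have "op1 P (\<lambda>N \<omega>. a N * (\<beta> N \<omega> - b N) + b N * (\<alpha> N \<omega> - a N) + (\<alpha> N \<omega> - a N) * (\<beta> N \<omega> - b N))"
    by (intro op1_add op1_mult_bounded[OF \<beta> a] op1_mult_bounded[OF \<alpha> b] op1_mult[OF \<alpha> \<beta>])
  then have \<alpha>\<beta>: "op1 P (\<lambda>N \<omega>. \<alpha> N \<omega> * \<beta> N \<omega> - a N * b N)"
    by (rule op1_cong) (simp add: algebra_simps)
  have XY: "op1 P (\<lambda>N \<omega>. a N * (b N * (X N \<omega> - Y N)))"
    using op1_diff[OF X op1_const[OF Y]] by (intro op1_mult_bounded[OF _ a] op1_mult_bounded[OF _ b]) simp
  have "op1 P (\<lambda>N \<omega>. (\<alpha> N \<omega> * \<beta> N \<omega> - a N * b N) * (X N \<omega> - S)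
      + S * (\<alpha> N \<omega> * \<beta> N \<omega> - a N * b N) + a N * (b N * (X N \<omega> - Y N)))"
    by (intro op1_add op1_mult[OF \<alpha>\<beta> X] op1_mult_bounded[OF \<alpha>\<beta>, of _ "\<bar>S\<bar>"] XY) simp
  then show ?thesis
    by (rule op1_cong) (simp add: algebra_simps)
qed

lemma op1_quadratic_form:
  assumes "finite I"
    and \<alpha>: "\<And>j. j \<in> I \<Longrightarrow> op1 P (\<lambda>N \<omega>. \<alpha> N \<omega> j - a N j)" and a: "\<And>N j. \<bar>a N j\<bar> \<le> K"
    and X: "\<And>j l. op1 P (\<lambda>N \<omega>. X N \<omega> j l - S j l)" and Y: "\<And>j l. (\<lambda>N. Y N j l - S j l) \<longlonglongrightarrow> 0"
  shows "op1 P (\<lambda>N \<omega>. (\<Sum>j\<in>I. \<Sum>l\<in>I. \<alpha> N \<omega> j * \<alpha> N \<omega> l * X N \<omega> j l)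
                   - (\<Sum>j\<in>I. \<Sum>l\<in>I. a N j * a N l * Y N j l))"
proof -
  have "op1 P (\<lambda>N \<omega>. \<Sum>j\<in>I. \<Sum>l\<in>I. \<alpha> N \<omega> j * \<alpha> N \<omega> l * X N \<omega> j l - a N j * a N l * Y N j l)"
    using \<open>finite I\<close> by (intro op1_sum op1_mult_consistent[OF \<alpha> \<alpha> X Y a a])
  then show ?thesis
    by (rule op1_cong) (simp add: sum_subtractf)
qed

subsection \<open>Solutions of perturbed linear systems\<close>

definition matrix_l1_norm :: "real^'n^'m \<Rightarrow> real" where
  "matrix_l1_norm G = (\<Sum>i\<in>UNIV. \<Sum>j\<in>UNIV. \<bar>G $ i $ j\<bar>)"

lemma matrix_l1_norm_nonneg: "0 \<le> matrix_l1_norm G"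
  unfolding matrix_l1_norm_def by (intro sum_nonneg) auto

lemma norm_matrix_vector_mult_le: "norm (G *v v) \<le> matrix_l1_norm G * norm v"
proof -
  have "\<bar>(G *v v) $ i\<bar> \<le> (\<Sum>j\<in>UNIV. \<bar>G $ i $ j\<bar>) * norm v" for i
  proof -
    have "\<bar>(G *v v) $ i\<bar> \<le> (\<Sum>j\<in>UNIV. \<bar>G $ i $ j\<bar> * \<bar>v $ j\<bar>)"
      unfolding matrix_vector_mult_def by (simp add: sum_abs[THEN order_trans] abs_mult)
    also have "\<dots> \<le> (\<Sum>j\<in>UNIV. \<bar>G $ i $ j\<bar> * norm v)"
      by (intro sum_mono mult_left_mono component_le_norm_cart) auto
    finally show ?thesis by (simp add: sum_distrib_right)
  qed
  then have "(\<Sum>i\<in>UNIV. \<bar>(G *v v) $ i\<bar>) \<le> matrix_l1_norm G * norm v"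
    unfolding matrix_l1_norm_def sum_distrib_right by (rule sum_mono)
  then show ?thesis
    using norm_le_l1_cart[of "G *v v"] by linarith
qed

lemma matrix_inv_right: "invertible A \<Longrightarrow> A ** matrix_inv A = mat 1"
  unfolding invertible_def matrix_inv_def by (rule someI2_ex) auto

lemma invertible_if_approximate_left_inverse:
  fixes M H :: "real^'n^'n"
  assumes "matrix_l1_norm (M ** H - mat 1) < 1"
  shows "invertible H"
  unfolding invertible_left_inverse matrix_left_invertible_ker
proof (intro allI impI)
  fix v
  assume "H *v v = 0"
  then have "v = - ((M ** H - mat 1) *v v)"
    by (simp add: matrix_vector_mult_diff_rdistrib flip: matrix_vector_mul_assoc)
  then have "norm v \<le> matrix_l1_norm (M ** H - mat 1) * norm v"
    by (metis norm_minus_cancel norm_matrix_vector_mult_le)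
  show "v = 0"
  proof (rule ccontr)
    assume "v \<noteq> 0"
    then have "matrix_l1_norm (M ** H - mat 1) * norm v < norm v"
      using mult_strict_right_mono[OF assms, of "norm v"] by simp
    with \<open>norm v \<le> matrix_l1_norm (M ** H - mat 1) * norm v\<close> show False
      by linarith
  qed
qed

text \<open>If \<open>M\<close> is an approximate inverse of \<open>H\<close>, the solution \<open>\<hat>b\<close> of \<open>H \<hat>b = h\<close> satisfies
  \<open>\<hat>b + G \<hat>b = M h\<close> with \<open>G = M H - 1\<close>, so \<open>\<hat>b - M t = M (h - t) - G (M t) - G (\<hat>b - M t)\<close>.\<close>

lemma norm_matrix_inv_solution_diff_le:
  fixes M H :: "real^'n^'n" and h t :: "real^'n"
  defines "G \<equiv> M ** H - mat 1"
  assumes small: "matrix_l1_norm G \<le> 1/2"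
  shows "norm (matrix_inv H *v h - M *v t) \<le> 2 * (norm (M *v (h - t)) + matrix_l1_norm G * norm (M *v t))"
proof -
  let ?b = "matrix_inv H *v h" and ?B = "M *v t" and ?S = "matrix_l1_norm G"
  have "invertible H"
    using small invertible_if_approximate_left_inverse[of M H] unfolding G_def by linarith
  then have "H *v ?b = h"
    by (simp add: matrix_vector_mul_assoc matrix_inv_right)
  then have "?b + G *v ?b = M *v h"
    by (simp add: G_def matrix_vector_mult_diff_rdistrib flip: matrix_vector_mul_assoc)
  then have "?b - ?B = M *v (h - t) - G *v ?B - G *v (?b - ?B)"
    by (simp add: matrix_vector_mult_diff_distrib algebra_simps)
  then have "norm (?b - ?B) = norm (M *v (h - t) - G *v ?B - G *v (?b - ?B))"
    by (rule arg_cong)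
  also have "\<dots> \<le> norm (M *v (h - t)) + norm (G *v ?B) + norm (G *v (?b - ?B))"
    using norm_triangle_ineq4[of "M *v (h - t) - G *v ?B" "G *v (?b - ?B)"]
      norm_triangle_ineq4[of "M *v (h - t)" "G *v ?B"] by linarith
  also have "\<dots> \<le> norm (M *v (h - t)) + ?S * norm ?B + ?S * norm (?b - ?B)"
    using norm_matrix_vector_mult_le[of G] by (intro add_mono) auto
  also have "\<dots> \<le> norm (M *v (h - t)) + ?S * norm ?B + 1/2 * norm (?b - ?B)"
    using small by (intro add_left_mono mult_right_mono) auto
  finally show ?thesis by argo
qed

lemma op1_matrix_inv_solution:
  fixes M :: "nat \<Rightarrow> real^'n^'n" and H :: "nat \<Rightarrow> 'a \<Rightarrow> real^'n^'n"
    and h :: "nat \<Rightarrow> 'a \<Rightarrow> real^'n" and t :: "nat \<Rightarrow> real^'n"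
  assumes "Bseq (\<lambda>N. M N *v t N)"
    and H: "\<And>i j. op1 P (\<lambda>N \<omega>. (M N ** H N \<omega> - mat 1) $ i $ j)"
    and h: "\<And>i. op1 P (\<lambda>N \<omega>. (M N *v (h N \<omega> - t N)) $ i)"
  shows "op1 P (\<lambda>N \<omega>. (matrix_inv (H N \<omega>) *v h N \<omega> - M N *v t N) $ i)"
proof -
  obtain K where "K > 0" and K: "\<forall>N. norm (M N *v t N) \<le> K"
    using assms(1) by (rule BseqE)
  define S where "S N \<omega> = matrix_l1_norm (M N ** H N \<omega> - mat 1)" for N \<omega>
  define r where "r N \<omega> = (\<Sum>i\<in>UNIV. \<bar>(M N *v (h N \<omega> - t N)) $ i\<bar>)" for N \<omega>
  have "op1 P (\<lambda>N \<omega>. S N \<omega> + r N \<omega>)"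
    unfolding S_def r_def matrix_l1_norm_def by (intro op1_add op1_sum op1_abs H h) simp_all
  then show ?thesis
  proof (rule op1_locally_dominated[where K = "2 * (1 + K)" and d = "1/2"])
    fix N \<omega>
    let ?d = "matrix_inv (H N \<omega>) *v h N \<omega> - M N *v t N"
    assume small: "\<bar>S N \<omega> + r N \<omega>\<bar> \<le> 1/2"
    have "0 \<le> S N \<omega>" "0 \<le> r N \<omega>" "norm (M N *v (h N \<omega> - t N)) \<le> r N \<omega>"
      by (simp_all add: S_def r_def matrix_l1_norm_nonneg sum_nonneg norm_le_l1_cart)
    moreover have "S N \<omega> * norm (M N *v t N) \<le> S N \<omega> * K"
      using K \<open>0 \<le> S N \<omega>\<close> by (simp add: mult_left_mono)
    moreover have "S N \<omega> * K \<le> (S N \<omega> + r N \<omega>) * K"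
      using \<open>0 \<le> r N \<omega>\<close> \<open>K > 0\<close> by (simp add: mult_right_mono)
    moreover have "\<bar>?d $ i\<bar> \<le> norm ?d"
      by (rule component_le_norm_cart)
    moreover have "S N \<omega> \<le> 1/2"
      using small \<open>0 \<le> r N \<omega>\<close> abs_ge_self[of "S N \<omega> + r N \<omega>"] by linarith
    then have "norm ?d \<le> 2 * (norm (M N *v (h N \<omega> - t N)) + S N \<omega> * norm (M N *v t N))"
      unfolding S_def by (rule norm_matrix_inv_solution_diff_le)
    ultimately show "\<bar>?d $ i\<bar> \<le> 2 * (1 + K) * \<bar>S N \<omega> + r N \<omega>\<bar>"
      by (simp add: algebra_simps)
  qed (use \<open>K > 0\<close> in auto)
qed

subsection \<open>Bilinearity of the Hartley variance and its estimator\<close>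

lemma ht_total_lincomb:
  fixes c :: "nat \<Rightarrow> real"
  shows "ht_total p S (\<lambda>k. c k * (\<Sum>j\<in>I. a j * f j k)) = (\<Sum>j\<in>I. a j * ht_total p S (\<lambda>k. c k * f j k))"
  unfolding ht_total_def by (simp add: sum_distrib_left mult_ac sum.swap[of _ S I])

lemma quad_est_lincomb:
  "quad_est Om S (\<lambda>k. c k * (\<Sum>j\<in>I. a j * f j k)) (\<lambda>k. d k * (\<Sum>l\<in>J. b l * g l k))
   = (\<Sum>j\<in>I. \<Sum>l\<in>J. a j * b l * quad_est Om S (\<lambda>k. c k * f j k) (\<lambda>k. d k * g l k))"
  unfolding quad_est_def
  by (simp add: sum_distrib_left sum_distrib_right mult_ac sum.swap[of _ S I] sum.swap[of _ S J]
      sum.swap[of _ I J])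

lemma pmf_cov_lincomb:
  fixes f g :: "'i \<Rightarrow> 'a \<Rightarrow> real"
  assumes "finite (set_pmf p)"
  shows "pmf_cov p (\<lambda>\<omega>. \<Sum>j\<in>I. a j * f j \<omega>) (\<lambda>\<omega>. \<Sum>l\<in>J. b l * g l \<omega>)
       = (\<Sum>j\<in>I. \<Sum>l\<in>J. a j * b l * pmf_cov p (f j) (g l))"
proof -
  note integrable = integrable_measure_pmf_finite[OF assms]
  let ?E = "measure_pmf.expectation p"
  have "((\<Sum>j\<in>I. a j * f j \<omega>) - (\<Sum>j\<in>I. a j * ?E (f j))) * ((\<Sum>l\<in>J. b l * g l \<omega>) - (\<Sum>l\<in>J. b l * ?E (g l)))
     = (\<Sum>j\<in>I. \<Sum>l\<in>J. a j * b l * ((f j \<omega> - ?E (f j)) * (g l \<omega> - ?E (g l))))" for \<omega>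
    by (simp add: sum_subtractf[symmetric] right_diff_distrib[symmetric] sum_product mult_ac)
  then show ?thesis
    unfolding pmf_cov_def by (simp add: integrable)
qed

lemma hartley_cov_lincomb:
  fixes f g :: "'i \<Rightarrow> nat \<Rightarrow> real"
  assumes "finite (set_pmf pA)" "finite (set_pmf pB)"
  shows "hartley_cov pA pB A B eta (\<lambda>k. \<Sum>j\<in>I. a j * f j k) (\<lambda>k. \<Sum>l\<in>J. b l * g l k)
      = (\<Sum>j\<in>I. \<Sum>l\<in>J. a j * b l * hartley_cov pA pB A B eta (f j) (g l))"
  unfolding hartley_cov_def ht_total_lincomb
  by (simp add: pmf_cov_lincomb assms sum.distrib distrib_left)

lemma hartley_cov_est_lincomb:
  fixes f g :: "'i \<Rightarrow> nat \<Rightarrow> real"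
  shows "hartley_cov_est OmA OmB A B eta s (\<lambda>k. \<Sum>j\<in>I. a j * f j k) (\<lambda>k. \<Sum>l\<in>J. b l * g l k)
      = (\<Sum>j\<in>I. \<Sum>l\<in>J. a j * b l * hartley_cov_est OmA OmB A B eta s (f j) (g l))"
  unfolding hartley_cov_est_def quad_est_lincomb
  by (simp add: sum.distrib distrib_left)

subsection \<open>Regression residuals\<close>

definition residual_coef :: "real^'p \<Rightarrow> 'p option \<Rightarrow> real" where
  "residual_coef b j = (case j of None \<Rightarrow> 1 | Some i \<Rightarrow> - b $ i)"

lemma residual_eq_lincomb_yx_var:
  "y k - x k \<bullet> b = (\<Sum>j\<in>UNIV. residual_coef b j * yx_var y x j k)"
  by (simp add: UNIV_option_conv sum.reindex residual_coef_def yx_var_def inner_vec_def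
      sum_negf mult.commute)

lemma hartley_cov_est_residual:
  "hartley_cov_est OmA OmB A B eta s (\<lambda>k. y k - x k \<bullet> b) (\<lambda>k. y k - x k \<bullet> b)
   = (\<Sum>j\<in>UNIV. \<Sum>l\<in>UNIV. residual_coef b j * residual_coef b l *
        hartley_cov_est OmA OmB A B eta s (yx_var y x j) (yx_var y x l))"
  by (simp only: residual_eq_lincomb_yx_var hartley_cov_est_lincomb)

lemma hartley_cov_residual:
  assumes "finite (set_pmf pA)" "finite (set_pmf pB)"
  shows "hartley_cov pA pB A B eta (\<lambda>k. y k - x k \<bullet> b) (\<lambda>k. y k - x k \<bullet> b)
   = (\<Sum>j\<in>UNIV. \<Sum>l\<in>UNIV. residual_coef b j * residual_coef b l *
        hartley_cov pA pB A B eta (yx_var y x j) (yx_var y x l))"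
  by (simp only: residual_eq_lincomb_yx_var hartley_cov_lincomb[OF assms])

lemma abs_residual_coef_le: "\<bar>residual_coef b j\<bar> \<le> 1 + norm b"
proof (cases j)
  case (Some i)
  with component_le_norm_cart[of b i] show ?thesis by (simp add: residual_coef_def)
qed (simp add: residual_coef_def)

lemma op1_residual_coef:
  assumes "\<And>i. op1 P (\<lambda>N \<omega>. (b N \<omega> - B N) $ i)"
  shows "op1 P (\<lambda>N \<omega>. residual_coef (b N \<omega>) j - residual_coef (B N) j)"
proof (cases j)
  case None
  then show ?thesis by (simp add: residual_coef_def op1_zero)
next
  case (Some i)
  with op1_minus[OF assms[of i]] show ?thesis by (simp add: residual_coef_def)
qed

theorem theorem2:
  fixes Af Bf :: "nat \<Rightarrow> nat set"
    and pA pB :: "nat \<Rightarrow> nat set pmf"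
    and nA nB :: "nat \<Rightarrow> nat"
    and eta c1 c2 c3 :: real
    and y :: "nat \<Rightarrow> nat \<Rightarrow> real"
    and x :: "nat \<Rightarrow> nat \<Rightarrow> real ^ 'p"
    and OmA OmB :: "nat \<Rightarrow> nat set \<Rightarrow> nat \<Rightarrow> nat \<Rightarrow> real"
    and Sig :: "'p option \<Rightarrow> 'p option \<Rightarrow> real"
  assumes frames: "\<And>N. Af N \<union> Bf N = {1..N}"
    and designA: "\<And>N. set_pmf (pA N) \<subseteq> {S. S \<subseteq> Af N \<and> card S = nA N}"
    and designB: "\<And>N. set_pmf (pB N) \<subseteq> {S. S \<subseteq> Bf N \<and> card S = nB N}"
    and domains_nonempty: "eventually (\<lambda>N. Af N - Bf N \<noteq> {} \<and> Bf N - Af N \<noteq> {}) sequentially"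
    and eta: "0 < eta" "eta < 1"
    and NA_lim: "filterlim (\<lambda>N. card (Af N)) at_top sequentially"
    and NB_lim: "filterlim (\<lambda>N. card (Bf N)) at_top sequentially"
    and nA_lim: "filterlim nA at_top sequentially"
    and nB_lim: "filterlim nB at_top sequentially"
    and c1: "(\<lambda>N. real (nA N) / real (nA N + nB N)) \<longlonglongrightarrow> c1" "0 < c1" "c1 < 1"
    and c2: "(\<lambda>N. real (card (Af N - Bf N)) / real (card (Af N))) \<longlonglongrightarrow> c2" "0 < c2" "c2 < 1"
    and c3: "(\<lambda>N. real (card (Bf N - Af N)) / real (card (Bf N))) \<longlonglongrightarrow> c3" "0 < c3" "c3 < 1"
    \<comment> \<open>(A1)\<close>
    and A1_BU: "eventually (\<lambda>N. invertible (\<Sum>k\<in>{1..N}. outer (x N k))) sequentially"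
      "convergent (\<lambda>N. matrix_inv (\<Sum>k\<in>{1..N}. outer (x N k)) *v (\<Sum>k\<in>{1..N}. y N k *\<^sub>R x N k))"
    and A1_xx: "\<And>i j. op1 (\<lambda>N. pair_pmf (pA N) (pB N))
       (\<lambda>N s. (matrix_inv (\<Sum>k\<in>{1..N}. outer (x N k))
               ** hartley_sum (pA N) (pB N) (Af N) (Bf N) eta s (\<lambda>k. outer (x N k)) - mat 1) $ i $ j)"
    and A1_xy: "\<And>i. op1 (\<lambda>N. pair_pmf (pA N) (pB N))
       (\<lambda>N s. (matrix_inv (\<Sum>k\<in>{1..N}. outer (x N k))
               *v (hartley_sum (pA N) (pB N) (Af N) (Bf N) eta s (\<lambda>k. y N k *\<^sub>R x N k)
                   - (\<Sum>k\<in>{1..N}. y N k *\<^sub>R x N k))) $ i)"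
    \<comment> \<open>(A2)\<close>
    and A2_lim: "\<And>j l. (\<lambda>N. real (nA N + nB N) / (real N)\<^sup>2 *
        hartley_cov (pA N) (pB N) (Af N) (Bf N) eta (yx_var (y N) (x N) j) (yx_var (y N) (x N) l))
        \<longlonglongrightarrow> Sig j l"
    and A2_pd: "pos_def Sig"
    \<comment> \<open>(A4)\<close>
    and A4: "\<And>j l. op1 (\<lambda>N. pair_pmf (pA N) (pB N))
       (\<lambda>N s. real (nA N + nB N) / (real N)\<^sup>2 *
          hartley_cov_est (OmA N) (OmB N) (Af N) (Bf N) eta s
            (yx_var (y N) (x N) j) (yx_var (y N) (x N) l) - Sig j l)"
  shows "op1 (\<lambda>N. pair_pmf (pA N) (pB N))
    (\<lambda>N s. real (nA N + nB N) / (real N)\<^sup>2 *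
       (hartley_cov_est (OmA N) (OmB N) (Af N) (Bf N) eta s
          (\<lambda>k. y N k - x N k \<bullet> (matrix_inv (hartley_sum (pA N) (pB N) (Af N) (Bf N) eta s (\<lambda>k. outer (x N k)))
                   *v hartley_sum (pA N) (pB N) (Af N) (Bf N) eta s (\<lambda>k. y N k *\<^sub>R x N k)))
          (\<lambda>k. y N k - x N k \<bullet> (matrix_inv (hartley_sum (pA N) (pB N) (Af N) (Bf N) eta s (\<lambda>k. outer (x N k)))
                   *v hartley_sum (pA N) (pB N) (Af N) (Bf N) eta s (\<lambda>k. y N k *\<^sub>R x N k)))
        - hartley_cov (pA N) (pB N) (Af N) (Bf N) eta
          (\<lambda>k. y N k - x N k \<bullet> (matrix_inv (\<Sum>k\<in>{1..N}. outer (x N k)) *v (\<Sum>k\<in>{1..N}. y N k *\<^sub>R x N k)))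
          (\<lambda>k. y N k - x N k \<bullet> (matrix_inv (\<Sum>k\<in>{1..N}. outer (x N k)) *v (\<Sum>k\<in>{1..N}. y N k *\<^sub>R x N k)))))"
proof -
  let ?P = "\<lambda>N. pair_pmf (pA N) (pB N)"
  define sc where "sc N = real (nA N + nB N) / (real N)\<^sup>2" for N
  define B where "B N = matrix_inv (\<Sum>k\<in>{1..N}. outer (x N k)) *v (\<Sum>k\<in>{1..N}. y N k *\<^sub>R x N k)" for N
  define b where "b N s = matrix_inv (hartley_sum (pA N) (pB N) (Af N) (Bf N) eta s (\<lambda>k. outer (x N k)))
    *v hartley_sum (pA N) (pB N) (Af N) (Bf N) eta s (\<lambda>k. y N k *\<^sub>R x N k)" for N s
  define V where "V N j l = hartley_cov (pA N) (pB N) (Af N) (Bf N) eta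
    (yx_var (y N) (x N) j) (yx_var (y N) (x N) l)" for N j l
  define v where "v N s j l = hartley_cov_est (OmA N) (OmB N) (Af N) (Bf N) eta s
    (yx_var (y N) (x N) j) (yx_var (y N) (x N) l)" for N s j l
  have fin: "finite (set_pmf (pA N))" "finite (set_pmf (pB N))" for N
  proof -
    have "set_pmf (pA N) \<subseteq> Pow {1..N}" "set_pmf (pB N) \<subseteq> Pow {1..N}"
      using designA[of N] designB[of N] frames[of N] by blast+
    then show "finite (set_pmf (pA N))" "finite (set_pmf (pB N))"
      by (simp_all add: finite_subset)
  qed
  have "Bseq B"
    unfolding B_def by (rule convergent_imp_Bseq[OF A1_BU(2)])
  then obtain K where K: "\<And>N. norm (B N) \<le> K"
    by (metis BseqE)
  have coef_bound: "\<bar>residual_coef (B N) j\<bar> \<le> 1 + K" for N j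
    using abs_residual_coef_le[of "B N" j] K[of N] by linarith
  have "op1 ?P (\<lambda>N s. (b N s - B N) $ i)" for i
    unfolding b_def B_def by (rule op1_matrix_inv_solution[OF convergent_imp_Bseq[OF A1_BU(2)] A1_xx A1_xy])
  then have "op1 ?P (\<lambda>N s. (\<Sum>j\<in>UNIV. \<Sum>l\<in>UNIV. residual_coef (b N s) j * residual_coef (b N s) l * (sc N * v N s j l))
                - (\<Sum>j\<in>UNIV. \<Sum>l\<in>UNIV. residual_coef (B N) j * residual_coef (B N) l * (sc N * V N j l)))"
    using A4 LIM_zero[OF A2_lim] coef_bound
    by (intro op1_quadratic_form[where K = "1 + K" and S = Sig] op1_residual_coef)
      (simp_all add: sc_def v_def V_def)
  then show ?thesis
    by (rule op1_cong) (simp add: hartley_cov_est_residual hartley_cov_residual fin sc_def v_def V_def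
        b_def B_def sum_distrib_left right_diff_distrib mult_ac)
qed

end
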